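(* Let $d \in \mathbb{N}$ and let $G$ be a (nonempty) subgraph of $Q_n$ with average degree at least $d$. Then $G$ contains at least $\frac{d!\,|V(G)|}{2}$ geodesics of length $d$.
   Context: The hypercube $Q_n$ has vertex set $\{0,1\}^n$, two vertices adjacent iff they differ in exactly one coordinate; the direction of an edge is that coordinate. A path in $Q_n$ is a geodesic if no two of its edges have the same direction; length means number of edges. Geodesics are counted as paths (subgraphs), i.e. a path and its reversal are counted once. The average degree of $G$ is $2|E(G)|/|V(G)|$. *)

theory Defs
  imports Main "HOL.Real"
begin

definition cube_verts :: "nat \<Rightarrow> bool list set" where
  "cube_verts n = {v. length v = n}"

definition cube_adj :: "bool list \<Rightarrow> bool list \<Rightarrow> bool" where
  "cube_adj u v \<longleftrightarrow> length u = length v \<and> card {i. i < length u \<and> u ! i \<noteq> v ! i} = 1"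

definition edge_dir :: "bool list \<Rightarrow> bool list \<Rightarrow> nat" where
  "edge_dir u v = (THE i. i < length u \<and> u ! i \<noteq> v ! i)"

definition cube_subgraph :: "nat \<Rightarrow> bool list set \<Rightarrow> bool list set set \<Rightarrow> bool" where
  "cube_subgraph n V E \<longleftrightarrow> V \<subseteq> cube_verts n \<and>
     E \<subseteq> {{u, v} | u v. u \<in> V \<and> v \<in> V \<and> cube_adj u v}"

definition is_geodesic_seq :: "bool list set \<Rightarrow> bool list set set \<Rightarrow> nat \<Rightarrow> bool list list \<Rightarrow> bool" where
  "is_geodesic_seq V E d p \<longleftrightarrow> length p = d + 1 \<and> set p \<subseteq> V \<and> distinct p \<and>
     (\<forall>i<d. {p ! i, p ! (i + 1)} \<in> E) \<and>
     distinct (map (\<lambda>i. edge_dir (p ! i) (p ! (i + 1))) [0..<d])"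

definition geodesics :: "bool list set \<Rightarrow> bool list set set \<Rightarrow> nat \<Rightarrow> bool list list set set" where
  "geodesics V E d = {{p, rev p} | p. is_geodesic_seq V E d p}"

end

theory Submission
  imports Defs "HOL-Combinatorics.Multiset_Permutations" "HOL-Library.Sublist"
begin

text \<open>
  Fix an ordering s of the n directions and, for a vertex x, let R_k(x) count the length-k
  subsequences of s along which one can walk from x inside G; such walks use distinct
  directions, so they trace geodesics. Reading the directions of s from the back, the potential
  R_d(x) + #{1 \<le> k < d. R_k(x) > 0} - R_1(x), summed over all vertices, never decreases:
  a new direction changes the counts only at the two ends of each of its edges, and at such a
  pair the newly positive levels pay for the new edge. Starting from 0 and using that the
  R_1(x) sum to 2|E|, the R_d(x) sum to at least 2|E| - (d - 1)|V| \<ge> |V|. A fixed sequence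
  of d distinct directions is a subsequence of exactly n!/d! of the n! orderings, so averaging
  gives at least d!|V| pairs of a start vertex and a direction sequence. These are distinct
  geodesic vertex sequences, and each geodesic arises from at most two of them.
\<close>

lemma sum_nonneg_involution:
  fixes f :: "'a \<Rightarrow> 'b::linordered_ab_group_add"
  assumes "finite A" "\<And>x. x \<in> A \<Longrightarrow> g x \<in> A" "\<And>x. x \<in> A \<Longrightarrow> g (g x) = x"
    and "\<And>x. x \<in> A \<Longrightarrow> 0 \<le> f x + f (g x)"
  shows "0 \<le> sum f A"
proof -
  have "sum f A = sum (f \<circ> g) A"
    by (rule sum.reindex_bij_witness[of A g g]) (simp_all add: assms(2,3))
  then have "sum f A + sum f A = (\<Sum>x\<in>A. f x + f (g x))"
    by (simp add: sum.distrib)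
  also have "0 \<le> \<dots>"
    by (rule sum_nonneg) (rule assms(4))
  finally show ?thesis
    by (metis add_neg_neg not_le)
qed

section \<open>Orderings containing a fixed subsequence\<close>

lemma sum_concentrated_at_point:
  fixes q :: nat
  assumes "finite A" "B \<subseteq> A" "h \<in> B"
  defines "f \<equiv> \<lambda>a. if a = h then card B * q else if a \<in> B then 0 else q"
  shows "sum f A = card A * q"
proof -
  have "finite B"
    using assms(1,2) by (rule finite_subset[rotated])
  have "sum f A = sum f (A - B) + sum f B"
    by (rule sum.subset_diff[OF assms(2,1)])
  also have "sum f (A - B) = (\<Sum>a\<in>A - B. q)"
    using assms(3) by (intro sum.cong) (auto simp: f_def)
  also have "sum f B = card B * q"
    using \<open>finite B\<close> assms(3) by (simp add: f_def sum.If_cases Int_absorb1)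
  also have "(\<Sum>a\<in>A - B. q) + card B * q = card A * q"
    using card_Diff_subset[OF \<open>finite B\<close> assms(2)] card_mono[OF assms(1,2)]
    by (simp add: add_mult_distrib[symmetric])
  finally show ?thesis .
qed

lemma card_permutations_of_set_filter_Cons:
  assumes "finite A" "A \<noteq> {}"
  shows "card {s \<in> permutations_of_set A. P s} =
    (\<Sum>a\<in>A. card {s \<in> permutations_of_set (A - {a}). P (a # s)})"
proof -
  have "{s \<in> permutations_of_set A. P s} =
      (\<Union>a\<in>A. Cons a ` {s \<in> permutations_of_set (A - {a}). P (a # s)})"
    using permutations_of_set_nonempty[OF assms(2)] by auto
  also have "card \<dots> = (\<Sum>a\<in>A. card (Cons a ` {s \<in> permutations_of_set (A - {a}). P (a # s)}))"
    using assms(1) by (intro card_UN_disjoint) auto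
  finally show ?thesis
    by (simp add: card_image)
qed

lemma Collect_subseq_Cons_permutations:
  "{s \<in> permutations_of_set (A - {a}). subseq (h # t) (a # s)} =
    (if a = h then {s \<in> permutations_of_set (A - {a}). subseq t s}
     else if a \<in> set t then {}
     else {s \<in> permutations_of_set (A - {a}). subseq (h # t) s})"
proof -
  have "a \<notin> set (h # t)" if "s \<in> permutations_of_set (A - {a})" "subseq (h # t) s" for s
    using permutations_of_setD(1)[OF that(1)] list_emb_set[OF that(2)] by auto
  then show ?thesis by auto
qed

lemma card_permutations_of_set_subseq:
  assumes "finite A" "distinct t" "set t \<subseteq> A"
  shows "card {s \<in> permutations_of_set A. subseq t s} * fact (length t) = fact (card A)"
  using assms
proof (induct "card A" arbitrary: A t)
  case (Suc m)
  show ?case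
  proof (cases t)
    case (Cons h t')
    have IH: "card {s \<in> permutations_of_set (A - {a}). subseq u s} * fact (length u) = fact m"
      if "a \<in> A" "distinct u" "set u \<subseteq> A - {a}" for a u
    proof -
      have "m = card (A - {a})"
        using Suc.hyps(2) Suc.prems(1) that(1) by simp
      with Suc.hyps(1)[of "A - {a}" u] Suc.prems(1) that(2,3) show ?thesis
        by simp
    qed
    have first: "card {s \<in> permutations_of_set (A - {a}). subseq t (a # s)} * fact (length t) =
        (if a = h then card (set t) * fact m else if a \<in> set t then 0 else fact m)" if "a \<in> A" for a
    proof (cases "a = h")
      case True
      with Cons Suc.prems(2,3) have "distinct t'" "set t' \<subseteq> A - {a}"
        by auto
      then have IHt': "card {s \<in> permutations_of_set (A - {a}). subseq t' s} * fact (length t') = fact m"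
        by (rule IH[OF that])
      have "card (set t) = Suc (length t')"
        using Suc.prems(2) Cons by (simp add: distinct_card)
      with True show ?thesis
        unfolding Cons Collect_subseq_Cons_permutations by (simp add: IHt'[symmetric] algebra_simps)
    next
      case False
      show ?thesis
      proof (cases "a \<in> set t")
        case True
        with False show ?thesis
          unfolding Cons Collect_subseq_Cons_permutations by simp
      next
        case notin: False
        then have "set t \<subseteq> A - {a}"
          using Suc.prems(3) by auto
        with IH[OF that Suc.prems(2)] False notin show ?thesis
          unfolding Cons Collect_subseq_Cons_permutations by simp
      qed
    qed
    have "h \<in> set t" "set t \<subseteq> A"
      using Cons Suc.prems(3) by auto
    then have "A \<noteq> {}" by auto
    have "card {s \<in> permutations_of_set A. subseq t s} * fact (length t) =
        (\<Sum>a\<in>A. card {s \<in> permutations_of_set (A - {a}). subseq t (a # s)} * fact (length t))"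
      by (simp add: card_permutations_of_set_filter_Cons[OF Suc.prems(1) \<open>A \<noteq> {}\<close>] sum_distrib_right)
    also have "\<dots> = (\<Sum>a\<in>A. if a = h then card (set t) * fact m else if a \<in> set t then 0 else fact m)"
      by (rule sum.cong) (simp_all add: first)
    also have "\<dots> = fact (card A)"
      using sum_concentrated_at_point[OF Suc.prems(1) \<open>set t \<subseteq> A\<close> \<open>h \<in> set t\<close>, of "fact m"]
        Suc.hyps(2)[symmetric]
      by simp
    finally show ?thesis .
  qed (use Suc.prems in simp)
qed simp

definition pos_levels :: "nat \<Rightarrow> (nat \<Rightarrow> nat) \<Rightarrow> nat set" where
  "pos_levels d a = {k. 1 \<le> k \<and> k < d \<and> 0 < a k}"

lemma card_pos_levels_le: "card (pos_levels d a) \<le> d - 1"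
proof -
  have "card (pos_levels d a) \<le> card {1..<d}"
    by (rule card_mono) (auto simp: pos_levels_def)
  then show ?thesis by simp
qed

lemma pos_levels_cong: "(\<And>k. 1 \<le> k \<Longrightarrow> a k = b k) \<Longrightarrow> pos_levels d a = pos_levels d b"
  unfolding pos_levels_def by auto

lemma pos_levels_eq_interval: "(\<And>k. 0 < a k \<longleftrightarrow> k < m) \<Longrightarrow> pos_levels d a = {1..<min d m}"
  unfolding pos_levels_def by (simp add: set_eq_iff)

lemma down_closed_support:
  fixes a :: "nat \<Rightarrow> nat"
  assumes down: "\<And>k. 0 < a (Suc k) \<Longrightarrow> 0 < a k" and "a N = 0"
  obtains m where "\<And>k. 0 < a k \<longleftrightarrow> k < m"
proof
  define m where "m = (LEAST k. a k = 0)"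
  have pos_le: "0 < a j" if "0 < a k" "j \<le> k" for j k
    using that by (induct k arbitrary: j) (auto simp: le_Suc_eq dest: down)
  have "a m = 0"
    unfolding m_def by (rule LeastI[of _ N]) (rule assms(2))
  then show "0 < a k \<longleftrightarrow> k < m" for k
    using pos_le[of k m] not_less_Least[of k "\<lambda>k. a k = 0", folded m_def] by force
qed

lemma shift_pair_interval_bound:
  fixes d ma mb :: nat
  assumes "1 \<le> ma" "ma \<le> mb" "1 \<le> d"
  shows "(min d ma - 1) + (min d mb - 1) + 2 \<le>
      (min d (max ma (Suc mb)) - 1) + (min d (max mb (Suc ma)) - 1)
      + (if d \<le> ma then 1 else 0) + (if d \<le> mb then 1 else 0)"
  using assms by (cases "d \<le> ma"; cases "d \<le> mb"; cases "ma = mb") (auto simp: min_def max_def)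

text \<open>
  Here a and b are the level counts at the two ends of an edge in a new direction; adding that
  direction in front of the ordering turns them into the two shifted sums.
\<close>
lemma card_pos_levels_shift_pair:
  fixes a b :: "nat \<Rightarrow> nat"
  assumes a: "\<And>k. 0 < a k \<longleftrightarrow> k < ma" and b: "\<And>k. 0 < b k \<longleftrightarrow> k < mb"
    and "1 \<le> ma" "1 \<le> mb" "1 \<le> d"
  shows "card (pos_levels d a) + card (pos_levels d b) + 2 \<le>
    card (pos_levels d (\<lambda>k. a k + b (k - 1))) + card (pos_levels d (\<lambda>k. b k + a (k - 1)))
      + a (d - 1) + b (d - 1)"
proof -
  have ab: "0 < a k + b (k - 1) \<longleftrightarrow> k < max ma (Suc mb)" for k
    using a[of k] b[of "k - 1"] \<open>1 \<le> ma\<close> by (cases k) (simp_all add: less_max_iff_disj)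
  have ba: "0 < b k + a (k - 1) \<longleftrightarrow> k < max mb (Suc ma)" for k
    using b[of k] a[of "k - 1"] \<open>1 \<le> mb\<close> by (cases k) (simp_all add: less_max_iff_disj)
  have top: "(if d \<le> ma then 1 else 0) \<le> a (d - 1)" "(if d \<le> mb then 1 else 0) \<le> b (d - 1)"
    using a[of "d - 1"] b[of "d - 1"] \<open>1 \<le> d\<close> by auto
  have "(min d ma - 1) + (min d mb - 1) + 2 \<le>
      (min d (max ma (Suc mb)) - 1) + (min d (max mb (Suc ma)) - 1)
      + (if d \<le> ma then 1 else 0) + (if d \<le> mb then 1 else 0)"
  proof (cases "ma \<le> mb")
    case True
    show ?thesis
      by (rule shift_pair_interval_bound[OF assms(3) True assms(5)])
  next
    case False
    with shift_pair_interval_bound[of mb ma d] assms(4,5) show ?thesis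
      by (simp add: ac_simps)
  qed
  also have "\<dots> \<le> (min d (max ma (Suc mb)) - 1) + (min d (max mb (Suc ma)) - 1) + a (d - 1) + b (d - 1)"
    using top by (intro add_mono add_left_mono)
  finally show ?thesis
    unfolding pos_levels_eq_interval[OF a] pos_levels_eq_interval[OF b]
      pos_levels_eq_interval[OF ab] pos_levels_eq_interval[OF ba] card_atLeastLessThan .
qed

definition flip :: "nat \<Rightarrow> bool list \<Rightarrow> bool list" where
  "flip i x = x[i := \<not> x ! i]"

lemma length_flip [simp]: "length (flip i x) = length x"
  by (simp add: flip_def)

lemma flip_flip [simp]: "flip i (flip i x) = x"
  by (cases "i < length x") (simp_all add: flip_def list_update_beyond)

lemma nth_flip_same: "i < length x \<Longrightarrow> flip i x ! i = (\<not> x ! i)"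
  by (simp add: flip_def)

lemma nth_flip_other: "j \<noteq> i \<Longrightarrow> flip i x ! j = x ! j"
  by (simp add: flip_def)

lemma flip_neq: "i < length x \<Longrightarrow> flip i x \<noteq> x"
  by (metis nth_flip_same)

lemma edge_dir_flip:
  assumes "i < length u"
  shows "edge_dir u (flip i u) = i"
  unfolding edge_dir_def
proof (rule the_equality)
  show "i < length u \<and> u ! i \<noteq> flip i u ! i"
    using assms by (simp add: nth_flip_same)
next
  fix j assume "j < length u \<and> u ! j \<noteq> flip i u ! j"
  then show "j = i" by (metis nth_flip_other)
qed

lemma cube_adj_imp_flip:
  assumes "cube_adj u v"
  obtains i where "i < length u" "v = flip i u"
proof -
  from assms have len: "length v = length u"
    and "card {i. i < length u \<and> u ! i \<noteq> v ! i} = 1"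
    unfolding cube_adj_def by auto
  then obtain i where i: "{j. j < length u \<and> u ! j \<noteq> v ! j} = {i}"
    by (auto simp: card_Suc_eq)
  then have il: "i < length u" by auto
  have "v = flip i u"
  proof (rule nth_equalityI)
    fix j assume "j < length v"
    then show "v ! j = flip i u ! j"
      using i il len by (cases "j = i") (auto simp: nth_flip_same nth_flip_other)
  qed (simp add: len)
  with il show thesis by (rule that)
qed

lemma cube_subgraph_length: "cube_subgraph n V E \<Longrightarrow> x \<in> V \<Longrightarrow> length x = n"
  by (auto simp: cube_subgraph_def cube_verts_def)

lemma finite_cube_subgraph:
  assumes "cube_subgraph n V E"
  shows "finite V"
proof (rule finite_subset)
  show "V \<subseteq> {xs. set xs \<subseteq> UNIV \<and> length xs = n}"
    using assms by (auto simp: cube_subgraph_length)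
qed (rule finite_lists_length_eq, simp)

lemma cube_subgraph_edge_endpoint: "cube_subgraph n V E \<Longrightarrow> {u, v} \<in> E \<Longrightarrow> u \<in> V"
  by (auto simp: cube_subgraph_def doubleton_eq_iff)

definition has_edge :: "bool list set set \<Rightarrow> bool list \<Rightarrow> nat \<Rightarrow> bool" where
  "has_edge E x i \<longleftrightarrow> i < length x \<and> {x, flip i x} \<in> E"

lemma has_edge_flip: "has_edge E x i \<Longrightarrow> has_edge E (flip i x) i"
  by (simp add: has_edge_def insert_commute)

lemma cube_subgraph_edgeE:
  assumes "cube_subgraph n V E" "e \<in> E" "x \<in> e"
  obtains i where "has_edge E x i" "e = {x, flip i x}"
proof -
  obtain u v where e: "e = {u, v}" "u \<in> V" "cube_adj u v"
    using assms(1,2) by (auto simp: cube_subgraph_def)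
  obtain i where i: "i < length u" "v = flip i u"
    using e(3) by (rule cube_adj_imp_flip)
  have "e = {x, flip i x}"
    using e assms(3) i by auto
  moreover have "i < length x"
    using e assms(3) i by auto
  ultimately show thesis
    using that assms(2) by (simp add: has_edge_def)
qed

lemma card_edges_le_sum_dirs:
  assumes "cube_subgraph n V E"
  shows "2 * card E \<le> (\<Sum>x\<in>V. card {i. has_edge E x i})"
proof -
  have finV: "finite V"
    using assms by (rule finite_cube_subgraph)
  have "E \<subseteq> Pow V"
    using assms by (auto simp: cube_subgraph_def)
  then have finE: "finite E"
    using finV by (meson finite_Pow_iff finite_subset)
  have "card {x \<in> V. x \<in> e} = 2" if e: "e \<in> E" for e
  proof -
    obtain u v where "e = {u, v}"
      using e assms unfolding cube_subgraph_def by blast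
    then have "u \<in> e" by simp
    with assms e obtain i where "has_edge E u i" "e = {u, flip i u}"
      by (rule cube_subgraph_edgeE)
    moreover have "e \<subseteq> V"
      using assms e by (auto simp: cube_subgraph_def)
    ultimately have "{x \<in> V. x \<in> e} = {u, flip i u}" "flip i u \<noteq> u"
      by (auto simp: has_edge_def flip_neq)
    then show ?thesis by simp
  qed
  then have "2 * card E = (\<Sum>x\<in>V. card {e \<in> E. x \<in> e})"
    using finV finE by (intro sum_multicount[symmetric]) auto
  also have "\<dots> \<le> (\<Sum>x\<in>V. card {i. has_edge E x i})"
  proof (rule sum_mono)
    fix x assume "x \<in> V"
    have "{e \<in> E. x \<in> e} \<subseteq> (\<lambda>i. {x, flip i x}) ` {i. has_edge E x i}"
      using assms by (blast elim: cube_subgraph_edgeE)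
    moreover have "finite {i. has_edge E x i}"
      by (rule finite_subset[of _ "{..<length x}"]) (auto simp: has_edge_def)
    ultimately show "card {e \<in> E. x \<in> e} \<le> card {i. has_edge E x i}"
      by (meson card_image_le card_mono finite_imageI le_trans)
  qed
  finally show ?thesis .
qed

section \<open>Walks along a sequence of directions\<close>

fun walk_in :: "bool list set set \<Rightarrow> bool list \<Rightarrow> nat list \<Rightarrow> bool" where
  "walk_in E x [] \<longleftrightarrow> True"
| "walk_in E x (i # t) \<longleftrightarrow> has_edge E x i \<and> walk_in E (flip i x) t"

fun walk_verts :: "bool list \<Rightarrow> nat list \<Rightarrow> bool list list" where
  "walk_verts x [] = [x]"
| "walk_verts x (i # t) = x # walk_verts (flip i x) t"

lemma length_walk_verts [simp]: "length (walk_verts x t) = Suc (length t)"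
  by (induct t arbitrary: x) auto

lemma walk_verts_nth_0 [simp]: "walk_verts x t ! 0 = x"
  by (cases t) auto

lemma walk_verts_nth_Suc:
  "j < length t \<Longrightarrow> walk_verts x t ! Suc j = flip (t ! j) (walk_verts x t ! j)"
  by (induct t arbitrary: x j) (auto simp: nth_Cons split: nat.split)

lemma length_walk_verts_nth: "j \<le> length t \<Longrightarrow> length (walk_verts x t ! j) = length x"
  by (induct t arbitrary: x j) (auto simp: nth_Cons split: nat.split)

lemma walk_in_dirs_less: "walk_in E x t \<Longrightarrow> set t \<subseteq> {..<length x}"
  by (induct t arbitrary: x) (force simp: has_edge_def)+

lemma walk_in_edge:
  "walk_in E x t \<Longrightarrow> j < length t \<Longrightarrow> {walk_verts x t ! j, walk_verts x t ! Suc j} \<in> E"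
  by (induct t arbitrary: x j) (auto simp: has_edge_def nth_Cons split: nat.split)

lemma walk_verts_subset:
  assumes "\<And>u v. {u, v} \<in> E \<Longrightarrow> u \<in> V"
  shows "walk_in E x t \<Longrightarrow> x \<in> V \<Longrightarrow> set (walk_verts x t) \<subseteq> V"
proof (induct t arbitrary: x)
  case (Cons i t)
  then have "{flip i x, x} \<in> E" by (simp add: has_edge_def insert_commute)
  with Cons show ?case by (auto intro: assms)
qed simp

lemma walk_verts_nth_notin_dirs:
  "i \<notin> set t \<Longrightarrow> z \<in> set (walk_verts x t) \<Longrightarrow> z ! i = x ! i"
proof (induct t arbitrary: x)
  case (Cons a t)
  then have "z = x \<or> z \<in> set (walk_verts (flip a x) t)" "i \<noteq> a" "i \<notin> set t"
    by auto
  then show ?case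
    using Cons.hyps[of "flip a x"] nth_flip_other[of i a x] by metis
qed simp

lemma distinct_walk_verts:
  "distinct t \<Longrightarrow> set t \<subseteq> {..<length x} \<Longrightarrow> distinct (walk_verts x t)"
proof (induct t arbitrary: x)
  case (Cons i t)
  then have "x ! i \<noteq> flip i x ! i"
    by (simp add: nth_flip_same)
  then have "x \<notin> set (walk_verts (flip i x) t)"
    using Cons.prems walk_verts_nth_notin_dirs[of i t x "flip i x"] by auto
  with Cons show ?case by simp
qed simp

lemma walk_verts_dirs:
  assumes "set t \<subseteq> {..<length x}"
  shows "map (\<lambda>j. edge_dir (walk_verts x t ! j) (walk_verts x t ! (j + 1))) [0..<length t] = t"
proof (rule nth_equalityI)
  fix j assume "j < length (map (\<lambda>j. edge_dir (walk_verts x t ! j) (walk_verts x t ! (j + 1))) [0..<length t])"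
  then have j: "j < length t" by simp
  have "t ! j < length x"
    using assms nth_mem[OF j] by blast
  then have "t ! j < length (walk_verts x t ! j)"
    using j length_walk_verts_nth[of j t x] by simp
  with j show "map (\<lambda>j. edge_dir (walk_verts x t ! j) (walk_verts x t ! (j + 1))) [0..<length t] ! j = t ! j"
    by (simp add: walk_verts_nth_Suc edge_dir_flip)
qed simp

lemma walk_verts_inj:
  assumes "walk_in E x t" "walk_in E' x' t'" "walk_verts x t = walk_verts x' t'"
  shows "x = x'" "t = t'"
proof -
  show "x = x'"
    using arg_cong[OF assms(3), of "\<lambda>p. p ! 0"] by simp
  have "length t = length t'"
    using arg_cong[OF assms(3), of length] by simp
  then show "t = t'"
    using walk_verts_dirs[OF walk_in_dirs_less[OF assms(1)]] walk_verts_dirs[OF walk_in_dirs_less[OF assms(2)]]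
      assms(3) \<open>x = x'\<close> by metis
qed

lemma is_geodesic_seq_walk_verts:
  assumes "\<And>u v. {u, v} \<in> E \<Longrightarrow> u \<in> V" "x \<in> V" "walk_in E x t" "distinct t"
  shows "is_geodesic_seq V E (length t) (walk_verts x t)"
  unfolding is_geodesic_seq_def
  using walk_verts_subset[OF assms(1,3,2)] distinct_walk_verts[OF assms(4) walk_in_dirs_less[OF assms(3)]]
    walk_in_edge[OF assms(3)] walk_verts_dirs[OF walk_in_dirs_less[OF assms(3)]] assms(4)
  by simp

section \<open>Counting walks along subsequences of an ordering\<close>

definition walk_count :: "bool list set set \<Rightarrow> nat list \<Rightarrow> nat \<Rightarrow> bool list \<Rightarrow> nat" where
  "walk_count E s k x = length (filter (\<lambda>t. length t = k \<and> walk_in E x t) (subseqs s))"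

lemma walk_count_0 [simp]: "walk_count E s 0 x = 1"
  unfolding walk_count_def by (induct s) (auto simp: Let_def filter_map o_def)

lemma walk_count_Nil_Suc [simp]: "walk_count E [] (Suc k) x = 0"
  unfolding walk_count_def by simp

lemma walk_count_Cons_Suc:
  "walk_count E (i # s) (Suc k) x =
     walk_count E s (Suc k) x + (if has_edge E x i then walk_count E s k (flip i x) else 0)"
  unfolding walk_count_def by (auto simp: Let_def filter_map o_def)

lemma walk_count_Cons_no_edge: "\<not> has_edge E x i \<Longrightarrow> walk_count E (i # s) k x = walk_count E s k x"
  by (cases k) (simp_all add: walk_count_Cons_Suc)

lemma walk_count_Cons_edge:
  "has_edge E x i \<Longrightarrow> 1 \<le> k \<Longrightarrow>
    walk_count E (i # s) k x = walk_count E s k x + walk_count E s (k - 1) (flip i x)"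
  using walk_count_Cons_Suc[of E i s "k - 1" x] by simp

lemma walk_count_1: "walk_count E s 1 x = length (filter (has_edge E x) s)"
proof (induct s)
  case (Cons i s)
  then show ?case
    using walk_count_Cons_Suc[of E i s 0 x] by simp
qed (simp add: One_nat_def)

lemma walk_count_eq_0: "length s < k \<Longrightarrow> walk_count E s k x = 0"
  unfolding walk_count_def by (auto simp: filter_empty_conv dest: list_emb_length)

lemma walk_count_Suc_pos: "0 < walk_count E s (Suc k) x \<Longrightarrow> 0 < walk_count E s k x"
proof (induct s arbitrary: k x)
  case (Cons i s)
  show ?case
  proof (cases k)
    case (Suc k')
    with Cons.prems show ?thesis
      using Cons.hyps[of k x] Cons.hyps[of k' "flip i x"]
      by (auto simp: walk_count_Cons_Suc split: if_splits)
  qed simp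
qed simp

lemma walk_count_support:
  obtains m where "1 \<le> m" "\<And>k. 0 < walk_count E s k x \<longleftrightarrow> k < m"
proof -
  obtain m where m: "\<And>k. 0 < walk_count E s k x \<longleftrightarrow> k < m"
    by (rule down_closed_support[of "\<lambda>k. walk_count E s k x" "Suc (length s)"])
       (auto intro: walk_count_Suc_pos walk_count_eq_0)
  show thesis
  proof (rule that)
    show "1 \<le> m"
      using m[of 0] by simp
  qed (rule m)
qed

lemma walk_count_distinct:
  assumes "distinct s"
  shows "walk_count E s k x = card {t. subseq t s \<and> length t = k \<and> walk_in E x t}"
proof -
  have "distinct (subseqs s)"
    using assms distinct_set_subseqs distinct_map by blast
  then show ?thesis
    unfolding walk_count_def by (simp add: distinct_length_filter set_subseqs_eq Int_def conj_commute)
qed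

definition walk_potential :: "bool list set set \<Rightarrow> nat \<Rightarrow> nat list \<Rightarrow> bool list \<Rightarrow> int" where
  "walk_potential E d s x =
     int (walk_count E s d x) + int (card (pos_levels d (\<lambda>k. walk_count E s k x))) - int (walk_count E s 1 x)"

lemma walk_potential_Nil: "1 \<le> d \<Longrightarrow> walk_potential E d [] x = 0"
  by (simp add: walk_potential_def pos_levels_def walk_count_eq_0)

lemma walk_potential_Cons_no_edge:
  "\<not> has_edge E x i \<Longrightarrow> walk_potential E d (i # s) x = walk_potential E d s x"
  by (simp add: walk_potential_def walk_count_Cons_no_edge)

lemma walk_potential_Cons_edge:
  assumes "has_edge E x i" "1 \<le> d"
  shows "walk_potential E d (i # s) x =
    walk_potential E d s x + int (walk_count E s (d - 1) (flip i x))
    + int (card (pos_levels d (\<lambda>k. walk_count E s k x + walk_count E s (k - 1) (flip i x))))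
    - int (card (pos_levels d (\<lambda>k. walk_count E s k x))) - 1"
proof -
  have "pos_levels d (\<lambda>k. walk_count E (i # s) k x) =
      pos_levels d (\<lambda>k. walk_count E s k x + walk_count E s (k - 1) (flip i x))"
    by (rule pos_levels_cong) (simp add: walk_count_Cons_edge assms(1))
  then show ?thesis
    using assms by (simp add: walk_potential_def walk_count_Cons_edge)
qed

lemma walk_potential_Cons_pair_mono:
  assumes "has_edge E x i" "1 \<le> d"
  shows "walk_potential E d s x + walk_potential E d s (flip i x)
    \<le> walk_potential E d (i # s) x + walk_potential E d (i # s) (flip i x)"
proof -
  obtain ma where ma: "1 \<le> ma" "\<And>k. 0 < walk_count E s k x \<longleftrightarrow> k < ma"
    using walk_count_support[of E s x] by blast
  obtain mb where mb: "1 \<le> mb" "\<And>k. 0 < walk_count E s k (flip i x) \<longleftrightarrow> k < mb"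
    using walk_count_support[of E s "flip i x"] by blast
  show ?thesis
    using card_pos_levels_shift_pair[OF ma(2) mb(2) ma(1) mb(1) assms(2)]
      walk_potential_Cons_edge[OF assms] walk_potential_Cons_edge[OF has_edge_flip[OF assms(1)] assms(2)]
    by simp
qed

lemma sum_walk_potential_nonneg:
  assumes edges: "\<And>u v. {u, v} \<in> E \<Longrightarrow> u \<in> V" and "finite V" "1 \<le> d"
  shows "0 \<le> (\<Sum>x\<in>V. walk_potential E d s x)"
proof (induct s)
  case Nil
  show ?case
    using walk_potential_Nil[OF \<open>1 \<le> d\<close>] by simp
next
  case (Cons i s)
  define W where "W = {x \<in> V. has_edge E x i}"
  define D where "D x = walk_potential E d (i # s) x - walk_potential E d s x" for x
  have "(\<Sum>x\<in>V. D x) = (\<Sum>x\<in>W. D x)"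
    by (rule sum.mono_neutral_right)
       (auto simp: W_def D_def walk_potential_Cons_no_edge \<open>finite V\<close>)
  also have "0 \<le> (\<Sum>x\<in>W. D x)"
  proof (rule sum_nonneg_involution[where g = "flip i"])
    fix x assume "x \<in> W"
    then have "has_edge E x i" by (simp add: W_def)
    then show "flip i x \<in> W"
      using edges[of "flip i x" x] by (simp add: W_def has_edge_flip has_edge_def insert_commute)
    show "0 \<le> D x + D (flip i x)"
      using walk_potential_Cons_pair_mono[OF \<open>has_edge E x i\<close> \<open>1 \<le> d\<close>, of s] by (simp add: D_def)
  qed (simp_all add: W_def \<open>finite V\<close>)
  finally show ?case
    using Cons by (simp add: D_def sum_subtractf)
qed

lemma walk_count_1_permutation:
  assumes "s \<in> permutations_of_set {..<length x}"
  shows "walk_count E s 1 x = card {i. has_edge E x i}"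
proof -
  have "{i. has_edge E x i} \<subseteq> set s"
    using permutations_of_setD(1)[OF assms] by (auto simp: has_edge_def)
  then show ?thesis
    using permutations_of_setD(2)[OF assms] unfolding walk_count_1
    by (simp add: distinct_length_filter Int_absorb2)
qed

lemma sum_walk_count_ge:
  assumes sub: "cube_subgraph n V E" and "1 \<le> d" and s: "s \<in> permutations_of_set {..<n}"
  shows "2 * card E \<le> (\<Sum>x\<in>V. walk_count E s d x) + (d - 1) * card V"
proof -
  have "2 * card E \<le> (\<Sum>x\<in>V. walk_count E s 1 x)"
    using card_edges_le_sum_dirs[OF sub] s walk_count_1_permutation
    by (simp add: cube_subgraph_length[OF sub])
  then have "int (2 * card E) \<le> (\<Sum>x\<in>V. int (walk_count E s 1 x))"
    by (metis of_nat_le_iff of_nat_sum)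
  moreover have "(\<Sum>x\<in>V. int (card (pos_levels d (\<lambda>k. walk_count E s k x)))) \<le> int ((d - 1) * card V)"
    using sum_mono[of V "\<lambda>x. int (card (pos_levels d (\<lambda>k. walk_count E s k x)))" "\<lambda>_. int (d - 1)"]
      card_pos_levels_le by (simp add: ac_simps)
  moreover have "0 \<le> (\<Sum>x\<in>V. walk_potential E d s x)"
    using cube_subgraph_edge_endpoint[OF sub] finite_cube_subgraph[OF sub] \<open>1 \<le> d\<close>
    by (rule sum_walk_potential_nonneg)
  ultimately have "int (2 * card E) \<le> int (\<Sum>x\<in>V. walk_count E s d x) + int ((d - 1) * card V)"
    by (simp add: walk_potential_def sum.distrib sum_subtractf)
  then show ?thesis
    by linarith
qed

section \<open>Averaging over all orderings\<close>

definition geodesic_dirs :: "bool list set set \<Rightarrow> bool list \<Rightarrow> nat \<Rightarrow> nat list set" where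
  "geodesic_dirs E x d = {t. length t = d \<and> distinct t \<and> walk_in E x t}"

lemma finite_geodesic_dirs: "finite (geodesic_dirs E x d)"
proof (rule finite_subset)
  show "geodesic_dirs E x d \<subseteq> {t. set t \<subseteq> {..<length x} \<and> length t = d}"
    by (auto simp: geodesic_dirs_def dest: walk_in_dirs_less)
qed (rule finite_lists_length_eq, simp)

lemma walk_count_permutation:
  assumes "s \<in> permutations_of_set A"
  shows "walk_count E s d x = card {t \<in> geodesic_dirs E x d. subseq t s}"
proof -
  have "distinct s"
    using assms by (rule permutations_of_setD)
  then show ?thesis
    by (auto simp: walk_count_distinct geodesic_dirs_def intro!: arg_cong[where f = card]
        dest: subseqs_distinctD[rotated])
qed

lemma sum_permutations_walk_count:
  "fact d * (\<Sum>s\<in>permutations_of_set {..<length x}. walk_count E s d x)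
    = fact (length x) * card (geodesic_dirs E x d)"
proof -
  let ?P = "permutations_of_set {..<length x}"
  have "(\<Sum>s\<in>?P. walk_count E s d x) = (\<Sum>s\<in>?P. card {t \<in> geodesic_dirs E x d. subseq t s})"
    by (rule sum.cong) (simp_all add: walk_count_permutation)
  also have "\<dots> = (\<Sum>t\<in>geodesic_dirs E x d. card {s \<in> ?P. subseq t s})"
    by (rule sum_multicount_gen) (auto simp: finite_geodesic_dirs)
  also have "fact d * \<dots> = (\<Sum>t\<in>geodesic_dirs E x d. fact (length x))"
  proof (unfold sum_distrib_left, rule sum.cong)
    fix t assume "t \<in> geodesic_dirs E x d"
    then have "length t = d" "distinct t" "set t \<subseteq> {..<length x}"
      by (auto simp: geodesic_dirs_def dest: walk_in_dirs_less)
    then show "fact d * card {s \<in> ?P. subseq t s} = fact (length x)"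
      using card_permutations_of_set_subseq[of "{..<length x}" t] by (simp add: mult.commute)
  qed simp
  finally show ?thesis
    by (simp add: mult.commute)
qed

lemma fact_mult_card_le_sum_geodesic_dirs:
  assumes sub: "cube_subgraph n V E" and deg: "d * card V \<le> 2 * card E"
  shows "fact d * card V \<le> (\<Sum>x\<in>V. card (geodesic_dirs E x d))"
proof (cases "d = 0")
  case True
  then have "geodesic_dirs E x d = {[]}" for x
    by (auto simp: geodesic_dirs_def)
  with True show ?thesis by simp
next
  case False
  define P where "P = permutations_of_set {..<n}"
  have "d * card V = card V + (d - 1) * card V"
    using False by (cases d) auto
  then have "card V \<le> (\<Sum>x\<in>V. walk_count E s d x)" if "s \<in> P" for s
    using sum_walk_count_ge[OF sub _ that[unfolded P_def], of d] deg False by linarith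
  then have "card P * card V \<le> (\<Sum>s\<in>P. \<Sum>x\<in>V. walk_count E s d x)"
    using sum_mono[of P "\<lambda>_. card V"] by simp
  also have "\<dots> = (\<Sum>x\<in>V. \<Sum>s\<in>P. walk_count E s d x)"
    by (rule sum.swap)
  finally have "fact n * (fact d * card V) \<le> fact d * (\<Sum>x\<in>V. \<Sum>s\<in>P. walk_count E s d x)"
    by (simp add: P_def ac_simps)
  also have "\<dots> = (\<Sum>x\<in>V. fact d * (\<Sum>s\<in>P. walk_count E s d x))"
    by (rule sum_distrib_left)
  also have "\<dots> = (\<Sum>x\<in>V. fact n * card (geodesic_dirs E x d))"
  proof (rule sum.cong)
    fix x assume "x \<in> V"
    then show "fact d * (\<Sum>s\<in>P. walk_count E s d x) = fact n * card (geodesic_dirs E x d)"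
      using sum_permutations_walk_count[of d E x] by (simp add: P_def cube_subgraph_length[OF sub])
  qed simp
  also have "\<dots> = fact n * (\<Sum>x\<in>V. card (geodesic_dirs E x d))"
    by (rule sum_distrib_left[symmetric])
  finally show ?thesis
    by simp
qed

lemma finite_geodesic_seqs: "finite V \<Longrightarrow> finite {p. is_geodesic_seq V E d p}"
  by (rule finite_subset[of _ "{p. set p \<subseteq> V \<and> length p = d + 1}"])
     (auto simp: is_geodesic_seq_def finite_lists_length_eq)

lemma sum_geodesic_dirs_le_card_geodesic_seqs:
  assumes sub: "cube_subgraph n V E"
  shows "(\<Sum>x\<in>V. card (geodesic_dirs E x d)) \<le> card {p. is_geodesic_seq V E d p}"
proof -
  let ?S = "SIGMA x:V. geodesic_dirs E x d"
  have "(\<Sum>x\<in>V. card (geodesic_dirs E x d)) = card ?S"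
    using finite_cube_subgraph[OF sub] by (simp add: card_SigmaI finite_geodesic_dirs)
  also have "\<dots> = card ((\<lambda>(x, t). walk_verts x t) ` ?S)"
    by (rule card_image[symmetric], rule inj_onI)
       (auto simp: geodesic_dirs_def dest: walk_verts_inj)
  also have "\<dots> \<le> card {p. is_geodesic_seq V E d p}"
  proof (rule card_mono)
    show "finite {p. is_geodesic_seq V E d p}"
      using finite_cube_subgraph[OF sub] by (rule finite_geodesic_seqs)
    show "(\<lambda>(x, t). walk_verts x t) ` ?S \<subseteq> {p. is_geodesic_seq V E d p}"
      using is_geodesic_seq_walk_verts[OF cube_subgraph_edge_endpoint[OF sub]]
      by (auto simp: geodesic_dirs_def)
  qed
  finally show ?thesis .
qed

lemma card_geodesic_seqs_le:
  assumes "finite V"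
  shows "card {p. is_geodesic_seq V E d p} \<le> 2 * card (geodesics V E d)"
proof -
  have "card {p. is_geodesic_seq V E d p} \<le> card (\<Union>(geodesics V E d))"
    by (rule card_mono) (auto simp: geodesics_def finite_geodesic_seqs[OF assms])
  also have "\<dots> \<le> (\<Sum>g\<in>geodesics V E d. card g)"
    by (rule card_Union_le_sum_card)
  also have "\<dots> \<le> (\<Sum>g\<in>geodesics V E d. 2)"
    by (rule sum_mono) (auto simp: geodesics_def card_insert_if)
  finally show ?thesis
    by simp
qed

theorem theorem5:
  fixes n d :: nat and V :: "bool list set" and E :: "bool list set set"
  assumes "cube_subgraph n V E"
    and "V \<noteq> {}"
    and "2 * real (card E) / real (card V) \<ge> real d"
  shows "real (card (geodesics V E d)) \<ge> real (fact d) * real (card V) / 2"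
proof -
  have "finite V"
    using assms(1) by (rule finite_cube_subgraph)
  with assms(2) have "0 < card V"
    by (simp add: card_gt_0_iff)
  with assms(3) have "d * card V \<le> 2 * card E"
    by (simp add: le_divide_eq flip: of_nat_mult of_nat_le_iff)
  then have "fact d * card V \<le> 2 * card (geodesics V E d)"
    using fact_mult_card_le_sum_geodesic_dirs[OF assms(1)]
      sum_geodesic_dirs_le_card_geodesic_seqs[OF assms(1)] card_geodesic_seqs_le[OF \<open>finite V\<close>]
    by (meson le_trans)
  then have "real (fact d * card V) \<le> real (2 * card (geodesics V E d))"
    by (simp only: of_nat_le_iff)
  then show ?thesis
    by simp
qed

end
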